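(* Let $X\subset\mathcal{S}^{m-1}$ be a finite set and let $S\subset\mathbb{R}^d$ be an $\epsilon$-isometric embedding of $X$. Then $(1-\epsilon)\,\omega(X)\le\omega(S)\le(1+\epsilon)\,\omega(X)$.
   Context: The gaussian width of $T\subseteq\mathbb{R}^D$ is $\omega(T)=\mathbb{E}_{\mathbf{g}}[\sup_{\mathbf{v}\in T}\langle\mathbf{g},\mathbf{v}\rangle]$ with $\mathbf{g}\sim N(0,1)^D$. $S$ is an $\epsilon$-isometric embedding of $X$ if $S=\psi(X)$ for a map $\psi:X\to\mathbb{R}^d$ with $(1-\epsilon)\|\mathbf{x}-\mathbf{y}\|_2\le\|\psi(\mathbf{x})-\psi(\mathbf{y})\|_2\le(1+\epsilon)\|\mathbf{x}-\mathbf{y}\|_2$ for all $\mathbf{x},\mathbf{y}\in X$. *)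

theory Defs
  imports "HOL-Probability.Probability"
begin

definition std_gaussian :: "'a::euclidean_space measure" where
  "std_gaussian = density lborel
     (\<lambda>x. ennreal ((2 * pi) powr (- real DIM('a) / 2) * exp (- (norm x)\<^sup>2 / 2)))"

definition gaussian_width :: "'a::euclidean_space set \<Rightarrow> real" where
  "gaussian_width T = (\<integral>g. (SUP v\<in>T. g \<bullet> v) \<partial>std_gaussian)"

definition eps_isometric :: "real \<Rightarrow> ('a::euclidean_space \<Rightarrow> 'b::euclidean_space) \<Rightarrow> 'a set \<Rightarrow> bool" where
  "eps_isometric \<epsilon> \<psi> X \<longleftrightarrow> (\<forall>x\<in>X. \<forall>y\<in>X.
      (1 - \<epsilon>) * dist x y \<le> dist (\<psi> x) (\<psi> y) \<and> dist (\<psi> x) (\<psi> y) \<le> (1 + \<epsilon>) * dist x y)"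

end

theory Submission
  imports Defs
begin

text \<open>
  By the Sudakov--Fernique inequality, the expected supremum of the Gaussian process
  \<open>(\<langle>g, a i\<rangle>)\<^sub>i\<close> can only grow when all increments \<open>\<parallel>a i - a j\<parallel>\<close> grow, even if the two
  families live in different spaces. An \<open>\<epsilon>\<close>-isometric \<open>\<psi>\<close> has increments between those of
  \<open>(1 - \<epsilon>) X\<close> and \<open>(1 + \<epsilon>) X\<close>, and the Gaussian width is positively homogeneous.

  Sudakov--Fernique is proved by placing the two families \<open>p\<close>, \<open>q\<close> in orthogonal
  coordinates and following \<open>\<theta> \<mapsto> E (1/\<beta>) log \<Sum>\<^sub>i exp (\<beta> \<langle>g, sin \<theta> q i + cos \<theta> p i\<rangle>)\<close>
  from \<open>\<theta> = 0\<close> to \<open>\<theta> = \<pi>/2\<close>. Gaussian integration by parts turns its derivative into an average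
  of \<open>sin \<theta> cos \<theta> (\<parallel>q i - q j\<parallel>\<^sup>2 - \<parallel>p i - p j\<parallel>\<^sup>2)\<close> against nonnegative weights, and the
  smoothing error \<open>log |I| / \<beta>\<close> vanishes as \<open>\<beta> \<rightarrow> \<infinity>\<close>.
\<close>

section \<open>Differentiation under the integral sign\<close>

lemma difference_quotient_le:
  fixes f f' :: "real \<Rightarrow> real"
  assumes der: "\<And>t. t \<in> {a<..<b} \<Longrightarrow> (f has_real_derivative f' t) (at t)"
    and bound: "\<And>t. t \<in> {a<..<b} \<Longrightarrow> \<bar>f' t\<bar> \<le> B"
    and s: "s \<in> {a<..<b}" and t: "t \<in> {a<..<b}" and "s \<noteq> t"
  shows "\<bar>(f t - f s) / (t - s)\<bar> \<le> B"
proof -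
  have ordered: "\<bar>(f r' - f r) / (r' - r)\<bar> \<le> B"
    if "r < r'" "r \<in> {a<..<b}" "r' \<in> {a<..<b}" for r r'
  proof -
    have "(f has_real_derivative f' x) (at x)" if "r \<le> x" "x \<le> r'" for x
      using der \<open>r \<in> {a<..<b}\<close> \<open>r' \<in> {a<..<b}\<close> that by auto
    then obtain z where "r < z" "z < r'" "f r' - f r = (r' - r) * f' z"
      using MVT2[OF \<open>r < r'\<close>] by blast
    then show ?thesis using bound[of z] that by auto
  qed
  have "(f t - f s) / (t - s) = (f s - f t) / (s - t)"
    by (metis minus_diff_eq minus_divide_divide)
  then show ?thesis
    using ordered[OF _ s t] ordered[OF _ t s] \<open>s \<noteq> t\<close> by (cases "s < t") auto
qed

lemma has_real_derivative_integral:
  fixes f f' :: "real \<Rightarrow> 'a \<Rightarrow> real"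
  assumes t0: "t0 \<in> {a<..<b}"
    and int: "\<And>t. t \<in> {a<..<b} \<Longrightarrow> integrable M (f t)"
    and meas: "f' t0 \<in> borel_measurable M"
    and der: "\<And>x t. x \<in> space M \<Longrightarrow> t \<in> {a<..<b} \<Longrightarrow> ((\<lambda>s. f s x) has_real_derivative f' t x) (at t)"
    and w: "integrable M w"
    and bound: "\<And>x t. x \<in> space M \<Longrightarrow> t \<in> {a<..<b} \<Longrightarrow> \<bar>f' t x\<bar> \<le> w x"
  shows "((\<lambda>t. \<integral>x. f t x \<partial>M) has_real_derivative (\<integral>x. f' t0 x \<partial>M)) (at t0)"
  unfolding has_field_derivative_iff tendsto_at_iff_sequentially
proof (intro allI impI)
  fix X :: "nat \<Rightarrow> real"
  assume X: "\<forall>i. X i \<in> UNIV - {t0}" and lim: "X \<longlonglongrightarrow> t0"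
  have ev: "eventually (\<lambda>n. X n \<in> {a<..<b}) sequentially"
    using lim by (rule topological_tendstoD) (use t0 in auto)
  define q where "q n x = (if X n \<in> {a<..<b} then (f (X n) x - f t0 x) / (X n - t0) else f' t0 x)" for n x
  have q_measurable: "q n \<in> borel_measurable M" for n
    using int[THEN borel_measurable_integrable] int[OF t0, THEN borel_measurable_integrable] meas
    unfolding q_def by (cases "X n \<in> {a<..<b}") auto
  have quotient_bound: "\<bar>(f t x - f t0 x) / (t - t0)\<bar> \<le> w x"
    if "x \<in> space M" "t \<in> {a<..<b}" "t \<noteq> t0" for x t
    using difference_quotient_le[of a b "\<lambda>s. f s x" "\<lambda>s. f' s x" "w x"] der bound that t0 by auto
  have q_bound: "AE x in M. norm (q n x) \<le> w x" for n
    using X quotient_bound bound[OF _ t0]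
    unfolding q_def by (auto simp: AE_iff_measurable)
  have q_lim: "AE x in M. (\<lambda>n. q n x) \<longlonglongrightarrow> f' t0 x"
  proof (rule AE_I2)
    fix x assume x: "x \<in> space M"
    have "((\<lambda>y. (f y x - f t0 x) / (y - t0)) \<circ> X) \<longlonglongrightarrow> f' t0 x"
      using der[OF x t0] X lim unfolding has_field_derivative_iff tendsto_at_iff_sequentially by blast
    then show "(\<lambda>n. q n x) \<longlonglongrightarrow> f' t0 x"
      by (rule Lim_transform_eventually) (use ev in \<open>auto simp: q_def elim: eventually_mono\<close>)
  qed
  have "(\<lambda>n. \<integral>x. q n x \<partial>M) \<longlonglongrightarrow> (\<integral>x. f' t0 x \<partial>M)"
    by (rule integral_dominated_convergence[OF meas q_measurable w q_lim q_bound])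
  moreover have "\<forall>\<^sub>F n in sequentially. (\<integral>x. q n x \<partial>M)
      = ((\<lambda>y. ((\<integral>x. f y x \<partial>M) - (\<integral>x. f t0 x \<partial>M)) / (y - t0)) \<circ> X) n"
  proof (rule eventually_mono[OF ev])
    fix n assume "X n \<in> {a<..<b}"
    then show "(\<integral>x. q n x \<partial>M) = ((\<lambda>y. ((\<integral>x. f y x \<partial>M) - (\<integral>x. f t0 x \<partial>M)) / (y - t0)) \<circ> X) n"
      using int[of "X n"] int[OF t0] by (simp add: q_def)
  qed
  ultimately show "((\<lambda>y. ((\<integral>x. f y x \<partial>M) - (\<integral>x. f t0 x \<partial>M)) / (y - t0)) \<circ> X) \<longlonglongrightarrow> (\<integral>x. f' t0 x \<partial>M)"
    by (rule Lim_transform_eventually)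
qed

section \<open>The standard Gaussian measure\<close>

definition std_gaussian_density :: "'a::euclidean_space \<Rightarrow> real" where
  "std_gaussian_density x = (2 * pi) powr (- real DIM('a) / 2) * exp (- (norm x)\<^sup>2 / 2)"

lemma std_gaussian_density_nonneg: "0 \<le> std_gaussian_density x"
  by (simp add: std_gaussian_density_def)

lemma borel_measurable_std_gaussian_density[measurable]:
  "std_gaussian_density \<in> borel_measurable borel"
  unfolding std_gaussian_density_def by measurable

lemma std_gaussian_eq_density: "std_gaussian = density lborel (\<lambda>x. ennreal (std_gaussian_density x))"
  by (simp add: std_gaussian_def std_gaussian_density_def)

lemma sets_std_gaussian[simp, measurable_cong]: "sets std_gaussian = sets borel"
  by (simp add: std_gaussian_def)

lemma space_std_gaussian[simp]: "space std_gaussian = UNIV"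
  by (simp add: std_gaussian_def)

lemma std_gaussian_density_eq_prod:
  "std_gaussian_density (x::'a::euclidean_space) = (\<Prod>b\<in>Basis. std_normal_density (x \<bullet> b))"
proof -
  have "(\<Prod>b\<in>Basis. std_normal_density (x \<bullet> b))
      = (\<Prod>b\<in>(Basis::'a set). 1 / sqrt (2 * pi)) * (\<Prod>b\<in>Basis. exp (- (x \<bullet> b)\<^sup>2 / 2))"
    by (subst prod.distrib[symmetric]) (simp add: std_normal_density_def)
  also have "(\<Prod>b\<in>(Basis::'a set). exp (- (x \<bullet> b)\<^sup>2 / 2)) = exp (- (norm x)\<^sup>2 / 2)"
  proof -
    have "(norm x)\<^sup>2 = (\<Sum>b\<in>Basis. (x \<bullet> b)\<^sup>2)"
      unfolding power2_norm_eq_inner euclidean_inner[of x x] by (simp add: power2_eq_square)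
    then show ?thesis
      by (simp add: exp_sum[symmetric] sum_divide_distrib sum_negf)
  qed
  also have "(\<Prod>b\<in>(Basis::'a set). 1 / sqrt (2 * pi)) = (2 * pi) powr (- real DIM('a) / 2)"
  proof -
    have "(\<Prod>b\<in>(Basis::'a set). 1 / sqrt (2 * pi)) = ((2 * pi) powr (-1/2)) ^ DIM('a)"
      by (simp add: powr_minus_divide powr_half_sqrt)
    then show ?thesis
      by (simp add: powr_realpow[symmetric] powr_powr)
  qed
  finally show ?thesis by (simp add: std_gaussian_density_def)
qed

lemma std_gaussian_density_Pair:
  "std_gaussian_density (x, y) = std_gaussian_density (x::'a::euclidean_space) * std_gaussian_density (y::'b::euclidean_space)"
proof -
  have "(norm (x, y))\<^sup>2 = (norm x)\<^sup>2 + (norm y)\<^sup>2" by (simp add: norm_Pair)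
  then show ?thesis
    by (simp add: std_gaussian_density_def DIM_prod powr_add[symmetric] mult_exp_exp[symmetric]
        add_divide_distrib diff_divide_distrib algebra_simps del: mult_exp_exp)
      (metis diff_conv_add_uminus exp_add)
qed

lemma prob_space_std_gaussian: "prob_space (std_gaussian :: 'a::euclidean_space measure)"
proof
  have "emeasure (std_gaussian :: 'a measure) (space std_gaussian)
      = (\<integral>\<^sup>+x. (\<Prod>b\<in>(Basis::'a set). ennreal (std_normal_density (x \<bullet> b))) \<partial>lborel)"
    by (simp add: std_gaussian_eq_density emeasure_density std_gaussian_density_eq_prod prod_ennreal)
  also have "\<dots> = (\<Prod>b\<in>(Basis::'a set). (\<integral>\<^sup>+x. ennreal (std_normal_density x) \<partial>lborel))"
    by (rule nn_integral_lborel_prod) auto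
  also have "\<dots> = 1"
    by (simp add: nn_integral_eq_integral)
  finally show "emeasure (std_gaussian :: 'a measure) (space std_gaussian) = 1" .
qed

interpretation std_gaussian: prob_space "std_gaussian :: 'a::euclidean_space measure"
  by (rule prob_space_std_gaussian)

lemma std_gaussian_Pair:
  "(std_gaussian :: ('a::euclidean_space \<times> 'b::euclidean_space) measure) = std_gaussian \<Otimes>\<^sub>M std_gaussian"
proof -
  have "(std_gaussian :: 'a measure) \<Otimes>\<^sub>M (std_gaussian :: 'b measure)
      = density (lborel \<Otimes>\<^sub>M lborel) (\<lambda>(x, y). ennreal (std_gaussian_density x) * ennreal (std_gaussian_density y))"
    unfolding std_gaussian_eq_density
    by (rule pair_measure_density) (auto simp: std_gaussian_eq_density[symmetric] intro: std_gaussian.sigma_finite_measure_axioms lborel.sigma_finite_measure_axioms)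
  also have "(\<lambda>(x, y). ennreal (std_gaussian_density x) * ennreal (std_gaussian_density y))
      = (\<lambda>z. ennreal (std_gaussian_density (z :: 'a \<times> 'b)))"
    by (auto simp: std_gaussian_density_Pair ennreal_mult std_gaussian_density_nonneg)
  finally show ?thesis
    by (simp add: lborel_prod std_gaussian_eq_density)
qed

lemma distr_fst_std_gaussian:
  "distr (std_gaussian :: ('a::euclidean_space \<times> 'b::euclidean_space) measure) borel fst = std_gaussian"
  using std_gaussian.distr_pair_fst[of "std_gaussian :: 'a measure"]
  by (simp add: std_gaussian_Pair cong: distr_cong)

lemma distr_snd_std_gaussian:
  "distr (std_gaussian :: ('a::euclidean_space \<times> 'b::euclidean_space) measure) borel snd = std_gaussian"
proof -
  interpret pair_sigma_finite "std_gaussian :: 'a measure" "std_gaussian :: 'b measure" ..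
  have "distr (std_gaussian :: ('a \<times> 'b) measure) borel snd
      = distr (distr ((std_gaussian :: 'b measure) \<Otimes>\<^sub>M (std_gaussian :: 'a measure))
          (std_gaussian \<Otimes>\<^sub>M std_gaussian) (\<lambda>(x, y). (y, x))) borel snd"
    unfolding std_gaussian_Pair by (rule arg_cong[where f="\<lambda>M. distr M borel snd"], rule distr_pair_swap)
  also have "\<dots> = distr ((std_gaussian :: 'b measure) \<Otimes>\<^sub>M (std_gaussian :: 'a measure)) borel fst"
    by (subst distr_distr) (auto simp: comp_def case_prod_beta cong: distr_cong)
  also have "\<dots> = std_gaussian"
    using std_gaussian.distr_pair_fst[of "std_gaussian :: 'b measure"] by (simp cong: distr_cong)
  finally show ?thesis .
qed

lemma integral_std_gaussian_fst:
  fixes f :: "'a::euclidean_space \<Rightarrow> real"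
  assumes [measurable]: "f \<in> borel_measurable borel"
  shows "(\<integral>z. f (fst z) \<partial>(std_gaussian :: ('a::euclidean_space \<times> 'b::euclidean_space) measure))
       = (\<integral>x. f x \<partial>std_gaussian)"
proof -
  have "(fst :: 'a \<times> 'b \<Rightarrow> _) \<in> std_gaussian \<rightarrow>\<^sub>M borel"
    unfolding measurable_cong_sets[OF sets_std_gaussian refl]
    by (intro borel_measurable_continuous_onI continuous_intros)
  then have "(\<integral>z. f (fst z) \<partial>(std_gaussian :: ('a \<times> 'b) measure))
      = (\<integral>x. f x \<partial>distr (std_gaussian :: ('a \<times> 'b) measure) borel fst)"
    by (rule integral_distr[symmetric]) simp
  then show ?thesis
    by (simp add: distr_fst_std_gaussian)
qed

lemma integral_std_gaussian_snd:
  fixes f :: "'b::euclidean_space \<Rightarrow> real"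
  assumes [measurable]: "f \<in> borel_measurable borel"
  shows "(\<integral>z. f (snd z) \<partial>(std_gaussian :: ('a::euclidean_space \<times> 'b::euclidean_space) measure))
       = (\<integral>y. f y \<partial>std_gaussian)"
proof -
  have "(snd :: 'a \<times> 'b \<Rightarrow> _) \<in> std_gaussian \<rightarrow>\<^sub>M borel"
    unfolding measurable_cong_sets[OF sets_std_gaussian refl]
    by (intro borel_measurable_continuous_onI continuous_intros)
  then have "(\<integral>z. f (snd z) \<partial>(std_gaussian :: ('a \<times> 'b) measure))
      = (\<integral>x. f x \<partial>distr (std_gaussian :: ('a \<times> 'b) measure) borel snd)"
    by (rule integral_distr[symmetric]) simp
  then show ?thesis
    by (simp add: distr_snd_std_gaussian)
qed

lemma exp_abs_mult_std_normal_density_le: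
  "exp (K * \<bar>t\<bar>) * std_normal_density t \<le> exp (K\<^sup>2 / 2) * (normal_density K 1 t + normal_density (-K) 1 t)"
proof -
  have shift: "exp (c * t) * std_normal_density t = exp (K\<^sup>2 / 2) * normal_density c 1 t" if "c\<^sup>2 = K\<^sup>2" for c
    using that
    by (simp add: normal_density_def std_normal_density_def mult_exp_exp[symmetric] power2_eq_square
        algebra_simps del: mult_exp_exp) (simp add: mult_exp_exp field_simps power2_eq_square)
  have "exp (K * \<bar>t\<bar>) \<le> exp (K * t) + exp (- K * t)"
    by (cases "t \<ge> 0") (auto simp: add_increasing add_increasing2)
  then have "exp (K * \<bar>t\<bar>) * std_normal_density t \<le> (exp (K * t) + exp (- K * t)) * std_normal_density t"
    by (rule mult_right_mono) simp
  also have "\<dots> = exp (K\<^sup>2 / 2) * (normal_density K 1 t + normal_density (-K) 1 t)"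
    using shift[of K] shift[of "-K"] by (simp add: algebra_simps)
  finally show ?thesis .
qed

lemma integrable_std_gaussian_exp_norm:
  assumes "0 \<le> K"
  shows "integrable (std_gaussian :: 'a::euclidean_space measure) (\<lambda>x. exp (K * norm x))"
proof -
  have "(\<integral>\<^sup>+t. ennreal (exp (K * \<bar>t\<bar>) * std_normal_density t) \<partial>lborel)
      \<le> (\<integral>\<^sup>+t. ennreal (exp (K\<^sup>2 / 2) * (normal_density K 1 t + normal_density (-K) 1 t)) \<partial>lborel)"
    by (intro nn_integral_mono ennreal_leI exp_abs_mult_std_normal_density_le)
  also have "\<dots> < \<infinity>"
    by (subst nn_integral_eq_integral) auto
  finally have one_dim: "(\<integral>\<^sup>+t. ennreal (exp (K * \<bar>t\<bar>) * std_normal_density t) \<partial>lborel) < \<infinity>" .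
  have "(\<integral>\<^sup>+x. ennreal (exp (K * (\<Sum>b\<in>Basis. \<bar>x \<bullet> b\<bar>))) \<partial>(std_gaussian :: 'a measure))
      = (\<integral>\<^sup>+x. (\<Prod>b\<in>(Basis::'a set). ennreal (exp (K * \<bar>x \<bullet> b\<bar>) * std_normal_density (x \<bullet> b))) \<partial>lborel)"
    unfolding std_gaussian_eq_density
    by (subst nn_integral_density)
      (auto intro!: nn_integral_cong simp: ennreal_mult[symmetric] std_gaussian_density_nonneg prod_ennreal
        prod_nonneg std_gaussian_density_eq_prod sum_distrib_left exp_sum prod.distrib mult.commute)
  also have "\<dots> = (\<Prod>b\<in>(Basis::'a set). (\<integral>\<^sup>+t. ennreal (exp (K * \<bar>t\<bar>) * std_normal_density t) \<partial>lborel))"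
    by (rule nn_integral_lborel_prod) auto
  also have "\<dots> < \<infinity>"
    using one_dim by (simp add: power_less_top_ennreal)
  finally have "integrable (std_gaussian :: 'a measure) (\<lambda>x. exp (K * (\<Sum>b\<in>Basis. \<bar>x \<bullet> b\<bar>)))"
    by (intro integrableI_bounded) auto
  then show ?thesis
    by (rule Bochner_Integration.integrable_bound)
      (auto intro!: AE_I2 mult_left_mono norm_le_l1 assms)
qed

lemma norm_le_exp_norm: "norm x \<le> exp (norm x)"
  using exp_ge_add_one_self[of "norm x"] by linarith

lemma integrable_std_gaussian_exp_bound:
  fixes f :: "'a::euclidean_space \<Rightarrow> real"
  assumes "f \<in> borel_measurable borel" and "0 \<le> K" and "\<And>x. \<bar>f x\<bar> \<le> C * exp (K * norm x)"
  shows "integrable std_gaussian f"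
proof (rule Bochner_Integration.integrable_bound)
  show "integrable std_gaussian (\<lambda>x. C * exp (K * norm x))"
    by (intro integrable_mult_right integrable_std_gaussian_exp_norm assms(2))
  show "AE x in std_gaussian. norm (f x) \<le> norm (C * exp (K * norm x))"
    using assms(3) by (auto intro!: AE_I2 intro: order_trans[OF _ abs_ge_self])
qed (use assms(1) in simp)

lemma integral_std_gaussian:
  assumes [measurable]: "f \<in> borel_measurable borel"
  shows "(\<integral>x. f x \<partial>std_gaussian) = (\<integral>x. std_gaussian_density x * f x \<partial>lborel)"
  unfolding std_gaussian_eq_density by (subst integral_density) (auto simp: std_gaussian_density_nonneg)

lemma std_gaussian_density_diff:
  "std_gaussian_density (x - t *\<^sub>R v)
     = std_gaussian_density (x::'a::euclidean_space) * exp (t * (x \<bullet> v) - t\<^sup>2 * (norm v)\<^sup>2 / 2)"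
proof -
  have "(norm (x - t *\<^sub>R v))\<^sup>2 = (norm x)\<^sup>2 - 2 * t * (x \<bullet> v) + t\<^sup>2 * (norm v)\<^sup>2"
    unfolding power2_norm_eq_inner
    by (simp add: inner_diff_left inner_diff_right inner_commute power2_eq_square algebra_simps)
  then show ?thesis
    by (simp add: std_gaussian_density_def mult_exp_exp[symmetric] field_simps del: mult_exp_exp)
      (simp add: mult_exp_exp field_simps)
qed

lemma integral_std_gaussian_translate:
  fixes h :: "'a::euclidean_space \<Rightarrow> real"
  assumes [measurable]: "h \<in> borel_measurable borel"
  shows "(\<integral>x. h (x + t *\<^sub>R v) \<partial>std_gaussian)
       = (\<integral>x. h x * exp (t * (x \<bullet> v) - t\<^sup>2 * (norm v)\<^sup>2 / 2) \<partial>std_gaussian)"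
proof -
  have "(\<integral>x. h (x + t *\<^sub>R v) \<partial>std_gaussian) = (\<integral>x. std_gaussian_density x * h (t *\<^sub>R v + x) \<partial>lborel)"
    by (subst integral_std_gaussian) (auto simp: add.commute)
  also have "\<dots> = (\<integral>y. std_gaussian_density (y - t *\<^sub>R v) * h y \<partial>distr lborel borel ((+) (t *\<^sub>R v)))"
    by (subst integral_distr) auto
  also have "\<dots> = (\<integral>y. std_gaussian_density y * (h y * exp (t * (y \<bullet> v) - t\<^sup>2 * (norm v)\<^sup>2 / 2)) \<partial>lborel)"
    by (simp add: lborel_distr_plus std_gaussian_density_diff algebra_simps)
  also have "\<dots> = (\<integral>x. h x * exp (t * (x \<bullet> v) - t\<^sup>2 * (norm v)\<^sup>2 / 2) \<partial>std_gaussian)"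
    by (subst integral_std_gaussian) auto
  finally show ?thesis .
qed

lemma std_gaussian_integration_by_parts:
  fixes h h' :: "'a::euclidean_space \<Rightarrow> real" and v :: 'a
  assumes [measurable]: "h \<in> borel_measurable borel" "h' \<in> borel_measurable borel"
    and h_bound: "\<And>x. \<bar>h x\<bar> \<le> B" and h'_bound: "\<And>x. \<bar>h' x\<bar> \<le> B"
    and h_deriv: "\<And>x t. ((\<lambda>s. h (x + s *\<^sub>R v)) has_real_derivative h' (x + t *\<^sub>R v)) (at t)"
  shows "(\<integral>x. h' x \<partial>std_gaussian) = (\<integral>x. (x \<bullet> v) * h x \<partial>std_gaussian)"
proof -
  define E where "E t x = exp (t * (x \<bullet> v) - t\<^sup>2 * (norm v)\<^sup>2 / 2)" for t and x :: 'a
  have B: "0 \<le> B" using h_bound[of 0] by linarith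
  have E_bound: "E t x \<le> exp (norm v * norm x)" if "t \<in> {-1<..<1}" for t x
  proof -
    have "t * (x \<bullet> v) \<le> \<bar>t\<bar> * (norm x * norm v)"
      using Cauchy_Schwarz_ineq2[of x v] by (metis abs_ge_self abs_mult abs_mult_pos abs_ge_zero
          mult_left_mono order_trans)
    also have "\<dots> \<le> norm v * norm x"
      using that by (auto simp: mult.commute intro: mult_left_le_one_le)
    finally have "t * (x \<bullet> v) \<le> norm v * norm x" .
    moreover have "0 \<le> t\<^sup>2 * (norm v)\<^sup>2 / 2" by simp
    ultimately show ?thesis
      unfolding E_def exp_le_cancel_iff by linarith
  qed
  \<comment> \<open>Differentiate \<open>t \<mapsto> E h(x + t v)\<close> at 0, once directly and once after the
      Cameron--Martin change of variables.\<close>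
  have direct: "((\<lambda>t. \<integral>x. h (x + t *\<^sub>R v) \<partial>std_gaussian) has_real_derivative
      (\<integral>x. h' (x + 0 *\<^sub>R v) \<partial>std_gaussian)) (at 0)"
    by (rule has_real_derivative_integral[where a="-1" and b=1 and w="\<lambda>_. B"])
      (auto simp: h'_bound h_deriv intro!: std_gaussian.integrable_const_bound[where B=B] h_bound)
  have translated: "((\<lambda>t. \<integral>x. h x * E t x \<partial>std_gaussian) has_real_derivative
      (\<integral>x. h x * ((x \<bullet> v) - 0 * (norm v)\<^sup>2) * E 0 x \<partial>std_gaussian)) (at 0)"
  proof (rule has_real_derivative_integral[where a="-1" and b=1
        and w="\<lambda>x. B * (norm v + (norm v)\<^sup>2) * exp ((norm v + 1) * norm x)"])
    show "integrable std_gaussian (\<lambda>x. h x * E t x)" if "t \<in> {-1<..<1}" for t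
    proof (rule integrable_std_gaussian_exp_bound[where C=B and K="norm v"])
      show "\<bar>h x * E t x\<bar> \<le> B * exp (norm v * norm x)" for x
        using mult_mono[OF h_bound E_bound[OF that] B] by (simp add: abs_mult E_def)
    qed (auto simp: E_def)
    show "((\<lambda>s. h x * E s x) has_real_derivative h x * ((x \<bullet> v) - t * (norm v)\<^sup>2) * E t x) (at t)" for x t
      unfolding E_def by (auto intro!: derivative_eq_intros simp: algebra_simps power2_eq_square)
    show "\<bar>h x * ((x \<bullet> v) - t * (norm v)\<^sup>2) * E t x\<bar> \<le> B * (norm v + (norm v)\<^sup>2) * exp ((norm v + 1) * norm x)"
      if "t \<in> {-1<..<1}" for x t
    proof -
      have "\<bar>t * (norm v)\<^sup>2\<bar> \<le> (norm v)\<^sup>2"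
        using that by (auto simp: abs_mult intro!: mult_left_le_one_le)
      then have "\<bar>(x \<bullet> v) - t * (norm v)\<^sup>2\<bar> \<le> norm x * norm v + (norm v)\<^sup>2"
        using Cauchy_Schwarz_ineq2[of x v] by linarith
      also have "\<dots> \<le> (norm v + (norm v)\<^sup>2) * (1 + norm x)"
        by (simp add: algebra_simps power2_eq_square)
      also have "\<dots> \<le> (norm v + (norm v)\<^sup>2) * exp (norm x)"
        by (intro mult_left_mono) (auto simp: exp_ge_add_one_self)
      finally have factor: "\<bar>(x \<bullet> v) - t * (norm v)\<^sup>2\<bar> \<le> (norm v + (norm v)\<^sup>2) * exp (norm x)" .
      have "\<bar>h x * ((x \<bullet> v) - t * (norm v)\<^sup>2) * E t x\<bar> = \<bar>h x\<bar> * \<bar>(x \<bullet> v) - t * (norm v)\<^sup>2\<bar> * E t x"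
        by (simp add: abs_mult E_def)
      also have "\<dots> \<le> B * ((norm v + (norm v)\<^sup>2) * exp (norm x)) * exp (norm v * norm x)"
        by (intro mult_mono h_bound factor E_bound that) (auto simp: B E_def)
      also have "\<dots> = B * (norm v + (norm v)\<^sup>2) * exp ((norm v + 1) * norm x)"
        by (simp add: mult_exp_exp[symmetric] algebra_simps del: mult_exp_exp)
      finally show ?thesis .
    qed
  qed (auto simp: E_def intro!: integrable_std_gaussian_exp_norm)
  have "(\<lambda>t. \<integral>x. h (x + t *\<^sub>R v) \<partial>std_gaussian) = (\<lambda>t. \<integral>x. h x * E t x \<partial>std_gaussian)"
    unfolding E_def by (intro ext integral_std_gaussian_translate) simp
  then have "(\<integral>x. h' (x + 0 *\<^sub>R v) \<partial>std_gaussian) = (\<integral>x. h x * ((x \<bullet> v) - 0 * (norm v)\<^sup>2) * E 0 x \<partial>std_gaussian)"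
    using DERIV_unique[OF direct] translated by simp
  then show ?thesis
    by (simp add: E_def mult.commute)
qed

section \<open>The Sudakov--Fernique inequality\<close>

lemma abs_SUP_le_sum_abs:
  fixes f :: "'i \<Rightarrow> real"
  assumes "finite I" "I \<noteq> {}"
  shows "\<bar>SUP i\<in>I. f i\<bar> \<le> (\<Sum>i\<in>I. \<bar>f i\<bar>)"
proof -
  have abs_le: "\<bar>f i\<bar> \<le> (\<Sum>i\<in>I. \<bar>f i\<bar>)" if "i \<in> I" for i
    using assms that by (intro member_le_sum) auto
  obtain i0 where i0: "i0 \<in> I" using assms by auto
  have "(SUP i\<in>I. f i) \<le> (\<Sum>i\<in>I. \<bar>f i\<bar>)"
    using assms abs_le by (intro cSUP_least) (auto intro: order_trans[OF abs_ge_self])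
  moreover have "f i0 \<le> (SUP i\<in>I. f i)"
    using assms i0 by (intro cSUP_upper) auto
  ultimately show ?thesis
    using abs_le[OF i0] by linarith
qed

lemma borel_measurable_SUP_inner[measurable]:
  fixes a :: "'i \<Rightarrow> 'a::euclidean_space"
  assumes "finite I"
  shows "(\<lambda>x. SUP i\<in>I. x \<bullet> a i) \<in> borel_measurable borel"
  using assms by (intro borel_measurable_cSUP) (auto simp: countable_finite)

lemma integrable_SUP_inner:
  fixes a :: "'i \<Rightarrow> 'a::euclidean_space"
  assumes "finite I" "I \<noteq> {}"
  shows "integrable std_gaussian (\<lambda>x. SUP i\<in>I. x \<bullet> a i)"
proof (rule integrable_std_gaussian_exp_bound[where K=1 and C="\<Sum>i\<in>I. norm (a i)"])
  fix x :: 'a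
  have "\<bar>SUP i\<in>I. x \<bullet> a i\<bar> \<le> (\<Sum>i\<in>I. \<bar>x \<bullet> a i\<bar>)"
    by (rule abs_SUP_le_sum_abs[OF assms])
  also have "\<dots> \<le> (\<Sum>i\<in>I. norm (a i) * exp (norm x))"
  proof (rule sum_mono)
    fix i
    have "\<bar>x \<bullet> a i\<bar> \<le> norm (a i) * norm x"
      using Cauchy_Schwarz_ineq2[of x "a i"] by (simp add: mult.commute)
    also have "\<dots> \<le> norm (a i) * exp (norm x)"
      by (intro mult_left_mono norm_le_exp_norm) simp
    finally show "\<bar>x \<bullet> a i\<bar> \<le> norm (a i) * exp (norm x)" .
  qed
  finally show "\<bar>SUP i\<in>I. x \<bullet> a i\<bar> \<le> (\<Sum>i\<in>I. norm (a i)) * exp (1 * norm x)"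
    by (simp add: sum_distrib_right)
qed (use assms in auto)

lemma weighted_diagonal_ge_quadratic_form:
  fixes w :: "'i \<Rightarrow> real" and D :: "'i \<Rightarrow> 'i \<Rightarrow> real"
  assumes "finite I" "\<And>i. i \<in> I \<Longrightarrow> 0 \<le> w i" "sum w I = 1"
    and "\<And>i j. i \<in> I \<Longrightarrow> j \<in> I \<Longrightarrow> 0 \<le> D i i + D j j - 2 * D i j"
  shows "(\<Sum>i\<in>I. \<Sum>j\<in>I. w i * w j * D i j) \<le> (\<Sum>i\<in>I. w i * D i i)"
proof -
  have diag: "(\<Sum>i\<in>I. \<Sum>j\<in>I. w i * w j * D i i) = (\<Sum>i\<in>I. w i * D i i)"
    using assms(3) by (simp add: mult.commute mult.left_commute sum_distrib_left[symmetric]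
        sum_distrib_right[symmetric])
  have "0 \<le> (\<Sum>i\<in>I. \<Sum>j\<in>I. w i * w j * (D i i + D j j - 2 * D i j))"
    using assms by (intro sum_nonneg mult_nonneg_nonneg) auto
  also have "\<dots> = (\<Sum>i\<in>I. \<Sum>j\<in>I. w i * w j * D i i) + (\<Sum>i\<in>I. \<Sum>j\<in>I. w i * w j * D j j)
      - 2 * (\<Sum>i\<in>I. \<Sum>j\<in>I. w i * w j * D i j)"
    by (simp add: algebra_simps sum.distrib sum_subtractf sum_distrib_left)
  also have "(\<Sum>i\<in>I. \<Sum>j\<in>I. w i * w j * D j j) = (\<Sum>i\<in>I. \<Sum>j\<in>I. w i * w j * D i i)"
    by (subst sum.swap) (simp add: mult.commute)
  finally show ?thesis
    using diag by linarith
qed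

locale gaussian_interpolation =
  fixes I :: "'i set" and p q :: "'i \<Rightarrow> 'a::euclidean_space" and \<beta> :: real
  assumes finite_I: "finite I" and nonempty_I: "I \<noteq> {}" and \<beta>_pos: "0 < \<beta>"
begin

definition path :: "real \<Rightarrow> 'i \<Rightarrow> 'a" where
  "path \<theta> i = sin \<theta> *\<^sub>R q i + cos \<theta> *\<^sub>R p i"

definition path' :: "real \<Rightarrow> 'i \<Rightarrow> 'a" where
  "path' \<theta> i = cos \<theta> *\<^sub>R q i - sin \<theta> *\<^sub>R p i"

definition partition_sum :: "real \<Rightarrow> 'a \<Rightarrow> real" where
  "partition_sum \<theta> x = (\<Sum>j\<in>I. exp (\<beta> * (x \<bullet> path \<theta> j)))"

definition smooth_max :: "real \<Rightarrow> 'a \<Rightarrow> real" where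
  "smooth_max \<theta> x = ln (partition_sum \<theta> x) / \<beta>"

definition gibbs :: "real \<Rightarrow> 'a \<Rightarrow> 'i \<Rightarrow> real" where
  "gibbs \<theta> x i = exp (\<beta> * (x \<bullet> path \<theta> i)) / partition_sum \<theta> x"

definition radius :: real where
  "radius = (\<Sum>i\<in>I. norm (p i) + norm (q i))"

lemma partition_sum_pos: "0 < partition_sum \<theta> x"
  unfolding partition_sum_def using finite_I nonempty_I by (intro sum_pos) auto

lemma gibbs_nonneg: "0 \<le> gibbs \<theta> x i"
  unfolding gibbs_def by (intro divide_nonneg_pos) (auto simp: partition_sum_pos)

lemma sum_gibbs: "(\<Sum>i\<in>I. gibbs \<theta> x i) = 1"
  using partition_sum_pos[of \<theta> x]
  by (simp add: gibbs_def sum_divide_distrib[symmetric] partition_sum_def[symmetric])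

lemma gibbs_le_1: "i \<in> I \<Longrightarrow> gibbs \<theta> x i \<le> 1"
  using sum_gibbs[of \<theta> x] member_le_sum[of i I "gibbs \<theta> x"] finite_I gibbs_nonneg by auto

lemma inner_path: "x \<bullet> path \<theta> i = sin \<theta> * (x \<bullet> q i) + cos \<theta> * (x \<bullet> p i)"
  by (simp add: path_def inner_add_right)

lemma inner_path': "x \<bullet> path' \<theta> i = cos \<theta> * (x \<bullet> q i) - sin \<theta> * (x \<bullet> p i)"
  by (simp add: path'_def inner_diff_right)

lemma has_real_derivative_smooth_max:
  "((\<lambda>\<theta>. smooth_max \<theta> x) has_real_derivative (\<Sum>i\<in>I. gibbs \<theta> x i * (x \<bullet> path' \<theta> i))) (at \<theta>)"
proof -
  have "((\<lambda>\<theta>. x \<bullet> path \<theta> i) has_real_derivative x \<bullet> path' \<theta> i) (at \<theta>)" for i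
    unfolding inner_path inner_path' by (auto intro!: derivative_eq_intros)
  then have "((\<lambda>\<theta>. partition_sum \<theta> x) has_real_derivative
      (\<Sum>j\<in>I. exp (\<beta> * (x \<bullet> path \<theta> j)) * (\<beta> * (x \<bullet> path' \<theta> j)))) (at \<theta>)"
    unfolding partition_sum_def by (intro DERIV_sum DERIV_chain2[OF DERIV_exp] DERIV_cmult)
  then have "((\<lambda>\<theta>. smooth_max \<theta> x) has_real_derivative
      (1 / partition_sum \<theta> x * (\<Sum>j\<in>I. exp (\<beta> * (x \<bullet> path \<theta> j)) * (\<beta> * (x \<bullet> path' \<theta> j)))) / \<beta>) (at \<theta>)"
    unfolding smooth_max_def by (intro DERIV_cdivide DERIV_chain2[OF DERIV_ln_divide] partition_sum_pos)
  then show ?thesis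
    using \<beta>_pos by (simp add: gibbs_def sum_divide_distrib sum_distrib_left)
qed

lemma radius_nonneg: "0 \<le> radius"
  unfolding radius_def by (intro sum_nonneg) auto

lemma abs_inner_combination_le:
  assumes "i \<in> I" "\<bar>a\<bar> \<le> 1" "\<bar>b\<bar> \<le> 1"
  shows "\<bar>a * (x \<bullet> q i) + b * (x \<bullet> p i)\<bar> \<le> radius * norm x"
proof -
  have "\<bar>a * (x \<bullet> q i) + b * (x \<bullet> p i)\<bar> \<le> \<bar>a\<bar> * \<bar>x \<bullet> q i\<bar> + \<bar>b\<bar> * \<bar>x \<bullet> p i\<bar>"
    by (metis abs_mult abs_triangle_ineq)
  also have "\<dots> \<le> 1 * (norm x * norm (q i)) + 1 * (norm x * norm (p i))"
    using assms by (intro add_mono mult_mono) (auto simp: Cauchy_Schwarz_ineq2)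
  also have "\<dots> = (norm (p i) + norm (q i)) * norm x"
    by (simp add: algebra_simps)
  also have "\<dots> \<le> radius * norm x"
    unfolding radius_def using assms finite_I by (intro mult_right_mono member_le_sum) auto
  finally show ?thesis .
qed

lemma abs_inner_path_le: "i \<in> I \<Longrightarrow> \<bar>x \<bullet> path \<theta> i\<bar> \<le> radius * norm x"
  unfolding inner_path by (intro abs_inner_combination_le) auto

lemma abs_inner_path'_le: "i \<in> I \<Longrightarrow> \<bar>x \<bullet> path' \<theta> i\<bar> \<le> radius * norm x"
  unfolding inner_path' using abs_inner_combination_le[of i "cos \<theta>" "- sin \<theta>" x] by simp

lemma inner_path_le_smooth_max: "i \<in> I \<Longrightarrow> x \<bullet> path \<theta> i \<le> smooth_max \<theta> x"
proof -
  assume i: "i \<in> I"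
  have "exp (\<beta> * (x \<bullet> path \<theta> i)) \<le> partition_sum \<theta> x"
    unfolding partition_sum_def using i finite_I by (intro member_le_sum) auto
  then have "\<beta> * (x \<bullet> path \<theta> i) \<le> ln (partition_sum \<theta> x)"
    using partition_sum_pos by (metis exp_le_cancel_iff exp_ln)
  then show ?thesis
    using \<beta>_pos by (simp add: smooth_max_def field_simps)
qed

lemma smooth_max_le:
  assumes "\<And>j. j \<in> I \<Longrightarrow> x \<bullet> path \<theta> j \<le> M"
  shows "smooth_max \<theta> x \<le> M + ln (card I) / \<beta>"
proof -
  have card: "0 < card I" using finite_I nonempty_I by (simp add: card_gt_0_iff)
  have "partition_sum \<theta> x \<le> card I * exp (\<beta> * M)"
    unfolding partition_sum_def using assms \<beta>_pos by (intro sum_bounded_above) auto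
  then have "ln (partition_sum \<theta> x) \<le> ln (card I * exp (\<beta> * M))"
    using card by (subst ln_le_cancel_iff) (auto simp: partition_sum_pos)
  also have "\<dots> = ln (card I) + \<beta> * M"
    using card by (simp add: ln_mult)
  finally show ?thesis
    using \<beta>_pos by (simp add: smooth_max_def field_simps)
qed

lemma ln_card_div_nonneg: "0 \<le> ln (card I) / \<beta>"
  using finite_I nonempty_I \<beta>_pos by (intro divide_nonneg_pos ln_ge_zero) (auto simp: Suc_le_eq card_gt_0_iff)

lemma abs_smooth_max_le: "\<bar>smooth_max \<theta> x\<bar> \<le> radius * norm x + ln (card I) / \<beta>"
proof -
  obtain i where i: "i \<in> I" using nonempty_I by auto
  have "smooth_max \<theta> x \<le> radius * norm x + ln (card I) / \<beta>"
    by (rule smooth_max_le) (meson abs_inner_path_le abs_le_D1)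
  moreover have "- (radius * norm x) \<le> smooth_max \<theta> x"
    using inner_path_le_smooth_max[OF i, of x \<theta>] abs_inner_path_le[OF i, of x \<theta>] by linarith
  ultimately show ?thesis
    using ln_card_div_nonneg by linarith
qed

lemma borel_measurable_smooth_max[measurable]: "smooth_max \<theta> \<in> borel_measurable borel"
  unfolding smooth_max_def partition_sum_def by measurable

lemma borel_measurable_gibbs[measurable]: "(\<lambda>x. gibbs \<theta> x i) \<in> borel_measurable borel"
  unfolding gibbs_def partition_sum_def by measurable

lemma integrable_smooth_max: "integrable std_gaussian (smooth_max \<theta>)"
proof (rule integrable_std_gaussian_exp_bound[where K=1 and C="radius + ln (card I) / \<beta>"])
  fix x :: 'a
  have "radius * norm x \<le> radius * exp (norm x)"
    by (intro mult_left_mono norm_le_exp_norm radius_nonneg)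
  moreover have "ln (card I) / \<beta> \<le> ln (card I) / \<beta> * exp (norm x)"
    by (metis ln_card_div_nonneg mult_left_mono mult.right_neutral one_le_exp_iff norm_ge_zero)
  ultimately show "\<bar>smooth_max \<theta> x\<bar> \<le> (radius + ln (card I) / \<beta>) * exp (1 * norm x)"
    using abs_smooth_max_le[of \<theta> x] by (simp add: algebra_simps)
qed auto

lemma abs_gibbs_inner_path'_le:
  assumes "i \<in> I"
  shows "\<bar>gibbs \<theta> x i * (x \<bullet> path' \<theta> i)\<bar> \<le> radius * exp (norm x)"
proof -
  have "\<bar>gibbs \<theta> x i * (x \<bullet> path' \<theta> i)\<bar> \<le> 1 * (radius * norm x)"
    unfolding abs_mult using assms
    by (intro mult_mono abs_inner_path'_le) (auto simp: gibbs_nonneg gibbs_le_1)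
  also have "\<dots> \<le> radius * exp (norm x)"
    by (simp add: mult_left_mono norm_le_exp_norm radius_nonneg)
  finally show ?thesis .
qed

lemma has_real_derivative_expected_smooth_max:
  "((\<lambda>\<theta>. \<integral>x. smooth_max \<theta> x \<partial>std_gaussian) has_real_derivative
     (\<integral>x. (\<Sum>i\<in>I. gibbs \<theta> x i * (x \<bullet> path' \<theta> i)) \<partial>std_gaussian)) (at \<theta>)"
proof (rule has_real_derivative_integral[where a="\<theta> - 1" and b="\<theta> + 1"
      and w="\<lambda>x. card I * (radius * exp (norm x))"])
  show "integrable std_gaussian (\<lambda>x. card I * (radius * exp (norm x)))"
    by (intro integrable_mult_right integrable_std_gaussian_exp_norm[of 1, simplified])
  show "\<bar>\<Sum>i\<in>I. gibbs t x i * (x \<bullet> path' t i)\<bar> \<le> card I * (radius * exp (norm x))" for t x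
    by (rule order_trans[OF sum_abs sum_bounded_above]) (use abs_gibbs_inner_path'_le in auto)
qed (auto simp: integrable_smooth_max has_real_derivative_smooth_max)


definition gibbs_deriv :: "real \<Rightarrow> 'a \<Rightarrow> 'i \<Rightarrow> 'a \<Rightarrow> real" where
  "gibbs_deriv \<theta> v i y = \<beta> * gibbs \<theta> y i * (v \<bullet> path \<theta> i - (\<Sum>j\<in>I. gibbs \<theta> y j * (v \<bullet> path \<theta> j)))"

lemma borel_measurable_gibbs_deriv[measurable]: "gibbs_deriv \<theta> v i \<in> borel_measurable borel"
  unfolding gibbs_deriv_def gibbs_def partition_sum_def by measurable

lemma has_real_derivative_gibbs_along:
  "((\<lambda>s. gibbs \<theta> (x + s *\<^sub>R v) i) has_real_derivative gibbs_deriv \<theta> v i (x + t *\<^sub>R v)) (at t)"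
proof -
  define e where "e j s = exp (\<beta> * (x \<bullet> path \<theta> j + s * (v \<bullet> path \<theta> j)))" for j s
  have e_deriv: "((\<lambda>s. e j s) has_real_derivative e j t * (\<beta> * (v \<bullet> path \<theta> j))) (at t)" for j
    unfolding e_def by (auto intro!: derivative_eq_intros)
  have gibbs_eq: "gibbs \<theta> (x + s *\<^sub>R v) j = e j s / (\<Sum>k\<in>I. e k s)" for s j
    by (simp add: gibbs_def partition_sum_def e_def inner_add_left algebra_simps)
  have nonzero: "(\<Sum>k\<in>I. e k t) \<noteq> 0"
    using partition_sum_pos[of \<theta> "x + t *\<^sub>R v"]
    by (simp add: partition_sum_def e_def inner_add_left algebra_simps)
  have "((\<lambda>s. e i s / (\<Sum>k\<in>I. e k s)) has_real_derivative
     (e i t * (\<beta> * (v \<bullet> path \<theta> i)) * (\<Sum>k\<in>I. e k t) - e i t * (\<Sum>k\<in>I. e k t * (\<beta> * (v \<bullet> path \<theta> k))))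
       / ((\<Sum>k\<in>I. e k t) * (\<Sum>k\<in>I. e k t))) (at t)"
    by (rule DERIV_divide[OF e_deriv DERIV_sum[OF e_deriv] nonzero])
  also have "(e i t * (\<beta> * (v \<bullet> path \<theta> i)) * (\<Sum>k\<in>I. e k t) - e i t * (\<Sum>k\<in>I. e k t * (\<beta> * (v \<bullet> path \<theta> k))))
       / ((\<Sum>k\<in>I. e k t) * (\<Sum>k\<in>I. e k t)) = gibbs_deriv \<theta> v i (x + t *\<^sub>R v)"
    unfolding gibbs_deriv_def gibbs_eq using nonzero
    by (simp add: field_simps sum_distrib_left sum_distrib_right sum_divide_distrib[symmetric] sum_subtractf)
  finally show ?thesis
    by (simp add: gibbs_eq)
qed

lemma abs_gibbs_deriv_le:
  assumes i: "i \<in> I"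
  shows "\<bar>gibbs_deriv \<theta> v i y\<bar> \<le> \<beta> * (\<bar>v \<bullet> path \<theta> i\<bar> + (\<Sum>j\<in>I. \<bar>v \<bullet> path \<theta> j\<bar>))"
proof -
  have average: "\<bar>\<Sum>j\<in>I. gibbs \<theta> y j * (v \<bullet> path \<theta> j)\<bar> \<le> (\<Sum>j\<in>I. \<bar>v \<bullet> path \<theta> j\<bar>)"
    using gibbs_le_1 gibbs_nonneg
    by (intro order_trans[OF sum_abs] sum_mono) (simp add: abs_mult mult_left_le_one_le)
  have "\<bar>gibbs_deriv \<theta> v i y\<bar> = \<beta> * gibbs \<theta> y i * \<bar>v \<bullet> path \<theta> i - (\<Sum>j\<in>I. gibbs \<theta> y j * (v \<bullet> path \<theta> j))\<bar>"
    using \<beta>_pos gibbs_nonneg[of \<theta> y i] by (simp add: gibbs_deriv_def abs_mult)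
  also have "\<dots> \<le> \<beta> * 1 * (\<bar>v \<bullet> path \<theta> i\<bar> + (\<Sum>j\<in>I. \<bar>v \<bullet> path \<theta> j\<bar>))"
    using \<beta>_pos gibbs_nonneg[of \<theta> y i] gibbs_le_1[OF i, of \<theta> y] average
    by (intro mult_mono) (auto intro: order_trans[OF abs_triangle_ineq4])
  finally show ?thesis by simp
qed

lemma integral_gibbs_inner_path':
  assumes i: "i \<in> I"
  shows "(\<integral>x. gibbs \<theta> x i * (x \<bullet> path' \<theta> i) \<partial>std_gaussian)
       = (\<integral>x. gibbs_deriv \<theta> (path' \<theta> i) i x \<partial>std_gaussian)"
proof -
  define B where "B = 1 + \<beta> * (\<bar>path' \<theta> i \<bullet> path \<theta> i\<bar> + (\<Sum>j\<in>I. \<bar>path' \<theta> i \<bullet> path \<theta> j\<bar>))"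
  have "0 \<le> \<beta> * (\<bar>path' \<theta> i \<bullet> path \<theta> i\<bar> + (\<Sum>j\<in>I. \<bar>path' \<theta> i \<bullet> path \<theta> j\<bar>))"
    using \<beta>_pos by (intro mult_nonneg_nonneg add_nonneg_nonneg sum_nonneg) auto
  then have "\<bar>gibbs \<theta> x i\<bar> \<le> B" "\<bar>gibbs_deriv \<theta> (path' \<theta> i) i x\<bar> \<le> B" for x
    using gibbs_le_1[OF i, of \<theta> x] gibbs_nonneg[of \<theta> x i] abs_gibbs_deriv_le[OF i, of \<theta> "path' \<theta> i" x]
    by (auto simp: B_def)
  from std_gaussian_integration_by_parts[OF _ _ this has_real_derivative_gibbs_along]
  show ?thesis
    by (simp add: mult.commute)
qed

lemma integral_sum_gibbs_inner_path':
  "(\<integral>x. (\<Sum>i\<in>I. gibbs \<theta> x i * (x \<bullet> path' \<theta> i)) \<partial>std_gaussian)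
     = (\<integral>x. (\<Sum>i\<in>I. gibbs_deriv \<theta> (path' \<theta> i) i x) \<partial>std_gaussian)"
proof -
  have "integrable std_gaussian (\<lambda>x. gibbs \<theta> x i * (x \<bullet> path' \<theta> i))" if "i \<in> I" for i
    using abs_gibbs_inner_path'_le[OF that, of \<theta>]
    by (intro integrable_std_gaussian_exp_bound[where K=1 and C=radius]) auto
  moreover have "integrable std_gaussian (gibbs_deriv \<theta> (path' \<theta> i) i)" if "i \<in> I" for i
    using abs_gibbs_deriv_le[OF that] by (intro std_gaussian.integrable_const_bound) auto
  ultimately show ?thesis
    by (simp add: Bochner_Integration.integral_sum integral_gibbs_inner_path')
qed

end

locale gaussian_comparison = gaussian_interpolation +
  assumes orthogonal: "\<And>i j. i \<in> I \<Longrightarrow> j \<in> I \<Longrightarrow> p i \<bullet> q j = 0"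
    and dist_le: "\<And>i j. i \<in> I \<Longrightarrow> j \<in> I \<Longrightarrow> norm (p i - p j) \<le> norm (q i - q j)"
begin

lemma sum_gibbs_deriv_nonneg:
  assumes "0 \<le> \<theta>" "\<theta> \<le> pi / 2"
  shows "0 \<le> (\<Sum>i\<in>I. gibbs_deriv \<theta> (path' \<theta> i) i y)"
proof -
  define D where "D i j = path' \<theta> i \<bullet> path \<theta> j" for i j
  have D: "D i j = sin \<theta> * cos \<theta> * (q i \<bullet> q j - p i \<bullet> p j)" if "i \<in> I" "j \<in> I" for i j
    using orthogonal[OF that] orthogonal[of j i] that
    by (simp add: D_def path_def path'_def inner_add_right inner_diff_left inner_commute algebra_simps)
  have sin_cos: "0 \<le> sin \<theta> * cos \<theta>"
    using assms by (intro mult_nonneg_nonneg sin_ge_zero cos_ge_zero) auto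
  have "0 \<le> D i i + D j j - 2 * D i j" if "i \<in> I" "j \<in> I" for i j
  proof -
    have "D i i + D j j - 2 * D i j = sin \<theta> * cos \<theta> * ((norm (q i - q j))\<^sup>2 - (norm (p i - p j))\<^sup>2)"
      unfolding D[OF that(1,1)] D[OF that(2,2)] D[OF that]
      by (simp add: power2_norm_eq_inner inner_diff_left inner_diff_right inner_commute algebra_simps)
    also have "\<dots> \<ge> 0"
      using dist_le[OF that] by (intro mult_nonneg_nonneg[OF sin_cos]) (auto intro: power_mono)
    finally show ?thesis .
  qed
  then have "(\<Sum>i\<in>I. \<Sum>j\<in>I. gibbs \<theta> y i * gibbs \<theta> y j * D i j) \<le> (\<Sum>i\<in>I. gibbs \<theta> y i * D i i)"
    by (intro weighted_diagonal_ge_quadratic_form finite_I gibbs_nonneg sum_gibbs)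
  moreover have "(\<Sum>i\<in>I. gibbs_deriv \<theta> (path' \<theta> i) i y)
      = \<beta> * ((\<Sum>i\<in>I. gibbs \<theta> y i * D i i) - (\<Sum>i\<in>I. \<Sum>j\<in>I. gibbs \<theta> y i * gibbs \<theta> y j * D i j))"
    by (simp add: gibbs_deriv_def D_def sum_distrib_left right_diff_distrib sum_subtractf algebra_simps)
  ultimately show ?thesis
    using \<beta>_pos by simp
qed

lemma expected_smooth_max_mono:
  "(\<integral>x. smooth_max 0 x \<partial>std_gaussian) \<le> (\<integral>x. smooth_max (pi / 2) x \<partial>std_gaussian)"
proof (rule DERIV_nonneg_imp_nondecreasing[where f="\<lambda>\<theta>. \<integral>x. smooth_max \<theta> x \<partial>std_gaussian"])
  fix \<theta> :: real assume "0 \<le> \<theta>" "\<theta> \<le> pi / 2"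
  then have "0 \<le> (\<integral>x. (\<Sum>i\<in>I. gibbs \<theta> x i * (x \<bullet> path' \<theta> i)) \<partial>std_gaussian)"
    unfolding integral_sum_gibbs_inner_path' by (intro integral_nonneg_AE AE_I2 sum_gibbs_deriv_nonneg)
  then show "\<exists>y. ((\<lambda>\<theta>. \<integral>x. smooth_max \<theta> x \<partial>std_gaussian) has_real_derivative y) (at \<theta>) \<and> 0 \<le> y"
    using has_real_derivative_expected_smooth_max by blast
qed simp

lemma expected_SUP_le:
  "(\<integral>x. (SUP i\<in>I. x \<bullet> p i) \<partial>std_gaussian)
     \<le> (\<integral>x. (SUP i\<in>I. x \<bullet> q i) \<partial>std_gaussian) + ln (card I) / \<beta>"
proof -
  have "(\<integral>x. (SUP i\<in>I. x \<bullet> p i) \<partial>std_gaussian) \<le> (\<integral>x. smooth_max 0 x \<partial>std_gaussian)"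
    using inner_path_le_smooth_max[of _ _ 0] nonempty_I
    by (intro integral_mono integrable_SUP_inner finite_I integrable_smooth_max cSUP_least)
      (auto simp: path_def)
  also have "\<dots> \<le> (\<integral>x. smooth_max (pi / 2) x \<partial>std_gaussian)"
    by (rule expected_smooth_max_mono)
  also have "\<dots> \<le> (\<integral>x. (SUP i\<in>I. x \<bullet> q i) + ln (card I) / \<beta> \<partial>std_gaussian)"
    using finite_I
    by (intro integral_mono integrable_SUP_inner nonempty_I integrable_smooth_max smooth_max_le
        Bochner_Integration.integrable_add) (auto simp: path_def intro!: cSUP_upper)
  also have "\<dots> = (\<integral>x. (SUP i\<in>I. x \<bullet> q i) \<partial>std_gaussian) + ln (card I) / \<beta>"
    using integrable_SUP_inner[OF finite_I nonempty_I]
    by (subst Bochner_Integration.integral_add) (auto simp: std_gaussian.prob_space[simplified])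
  finally show ?thesis .
qed

end

theorem sudakov_fernique_orthogonal:
  fixes I :: "'i set" and p q :: "'i \<Rightarrow> 'a::euclidean_space"
  assumes "finite I" "I \<noteq> {}"
    and "\<And>i j. i \<in> I \<Longrightarrow> j \<in> I \<Longrightarrow> p i \<bullet> q j = 0"
    and "\<And>i j. i \<in> I \<Longrightarrow> j \<in> I \<Longrightarrow> norm (p i - p j) \<le> norm (q i - q j)"
  shows "(\<integral>x. (SUP i\<in>I. x \<bullet> p i) \<partial>std_gaussian) \<le> (\<integral>x. (SUP i\<in>I. x \<bullet> q i) \<partial>std_gaussian)"
proof (rule field_le_epsilon)
  fix e :: real assume e: "0 < e"
  have ln_card: "0 \<le> ln (card I)"
    using assms(1,2) by (intro ln_ge_zero) (simp add: Suc_le_eq card_gt_0_iff)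
  define \<beta> where "\<beta> = (ln (card I) + 1) / e"
  interpret gaussian_comparison I p q \<beta>
    using assms e ln_card by unfold_locales (auto simp: \<beta>_def)
  have "ln (card I) / \<beta> \<le> e"
    using e ln_card by (simp add: \<beta>_def field_simps)
  then show "(\<integral>x. (SUP i\<in>I. x \<bullet> p i) \<partial>std_gaussian) \<le> (\<integral>x. (SUP i\<in>I. x \<bullet> q i) \<partial>std_gaussian) + e"
    using expected_SUP_le by linarith
qed

theorem sudakov_fernique:
  fixes a :: "'i \<Rightarrow> 'a::euclidean_space" and b :: "'i \<Rightarrow> 'b::euclidean_space"
  assumes "finite I" "I \<noteq> {}"
    and "\<And>i j. i \<in> I \<Longrightarrow> j \<in> I \<Longrightarrow> dist (a i) (a j) \<le> dist (b i) (b j)"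
  shows "(\<integral>x. (SUP i\<in>I. x \<bullet> a i) \<partial>std_gaussian) \<le> (\<integral>y. (SUP i\<in>I. y \<bullet> b i) \<partial>std_gaussian)"
proof -
  \<comment> \<open>Embed \<open>a\<close> and \<open>b\<close> into the orthogonal factors of \<open>'a \<times> 'b\<close>.\<close>
  have "(\<integral>x. (SUP i\<in>I. x \<bullet> a i) \<partial>std_gaussian)
      = (\<integral>z. (SUP i\<in>I. z \<bullet> (a i, 0)) \<partial>(std_gaussian :: ('a \<times> 'b) measure))"
    using integral_std_gaussian_fst[of "\<lambda>x. SUP i\<in>I. x \<bullet> a i", where 'b='b] assms(1)
    by (simp add: inner_Pair_0)
  also have "\<dots> \<le> (\<integral>z. (SUP i\<in>I. z \<bullet> (0, b i)) \<partial>(std_gaussian :: ('a \<times> 'b) measure))"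
    using assms by (intro sudakov_fernique_orthogonal) (auto simp: dist_norm)
  also have "\<dots> = (\<integral>y. (SUP i\<in>I. y \<bullet> b i) \<partial>std_gaussian)"
    using integral_std_gaussian_snd[of "\<lambda>y. SUP i\<in>I. y \<bullet> b i", where 'a='a] assms(1)
    by (simp add: inner_Pair_0)
  finally show ?thesis .
qed

section \<open>Gaussian width\<close>

lemma gaussian_width_image_mono:
  fixes f :: "'i \<Rightarrow> 'a::euclidean_space" and g :: "'i \<Rightarrow> 'b::euclidean_space"
  assumes "finite I" "I \<noteq> {}"
    and "\<And>i j. i \<in> I \<Longrightarrow> j \<in> I \<Longrightarrow> dist (f i) (f j) \<le> dist (g i) (g j)"
  shows "gaussian_width (f ` I) \<le> gaussian_width (g ` I)"
  using sudakov_fernique[OF assms] by (simp add: gaussian_width_def image_image)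

lemma gaussian_width_nonneg:
  fixes T :: "'a::euclidean_space set"
  assumes "finite T" "T \<noteq> {}"
  shows "0 \<le> gaussian_width T"
proof -
  have "gaussian_width ((\<lambda>_. 0 :: 'a) ` T) \<le> gaussian_width (id ` T)"
    using assms by (intro gaussian_width_image_mono) auto
  moreover have "(\<lambda>_. 0 :: 'a) ` T = {0}"
    using assms(2) by auto
  ultimately show ?thesis
    by (simp add: gaussian_width_def)
qed

lemma SUP_mult_left_nonneg:
  fixes f :: "'i \<Rightarrow> real"
  assumes "finite I" "I \<noteq> {}" "0 \<le> c"
  shows "(SUP i\<in>I. c * f i) = c * (SUP i\<in>I. f i)"
proof -
  have "mono ((*) c)"
    using assms by (auto intro: monoI mult_left_mono)
  then have "Max ((*) c ` f ` I) = c * Max (f ` I)"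
    using assms by (simp add: mono_Max_commute)
  then show ?thesis
    using assms by (simp add: cSup_eq_Max image_image)
qed

lemma gaussian_width_scaleR:
  fixes T :: "'a::euclidean_space set"
  assumes "finite T" "T \<noteq> {}" "0 \<le> c"
  shows "gaussian_width ((*\<^sub>R) c ` T) = c * gaussian_width T"
  using SUP_mult_left_nonneg[OF assms] by (simp add: gaussian_width_def image_image)

lemma gaussian_width_lipschitz_image:
  fixes X :: "'a::euclidean_space set" and \<psi> :: "'a \<Rightarrow> 'b::euclidean_space"
  assumes "finite X" "X \<noteq> {}" and "C-lipschitz_on X \<psi>"
  shows "gaussian_width (\<psi> ` X) \<le> C * gaussian_width X"
proof -
  have "C \<ge> 0" "\<And>x y. x \<in> X \<Longrightarrow> y \<in> X \<Longrightarrow> dist (\<psi> x) (\<psi> y) \<le> C * dist x y"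
    using assms(3) by (auto simp: lipschitz_on_def)
  then have "gaussian_width (\<psi> ` X) \<le> gaussian_width ((*\<^sub>R) C ` X)"
    using assms(1,2) by (intro gaussian_width_image_mono) (auto simp: dist_norm scaleR_diff_right[symmetric])
  also have "\<dots> = C * gaussian_width X"
    using assms(1,2) \<open>C \<ge> 0\<close> by (rule gaussian_width_scaleR)
  finally show ?thesis .
qed

lemma gaussian_width_expanding_image:
  fixes X :: "'a::euclidean_space set" and \<psi> :: "'a \<Rightarrow> 'b::euclidean_space"
  assumes "finite X" "X \<noteq> {}" and "0 \<le> c"
    and "\<And>x y. x \<in> X \<Longrightarrow> y \<in> X \<Longrightarrow> c * dist x y \<le> dist (\<psi> x) (\<psi> y)"
  shows "c * gaussian_width X \<le> gaussian_width (\<psi> ` X)"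
proof -
  have "c * gaussian_width X = gaussian_width ((*\<^sub>R) c ` X)"
    using assms(1-3) by (rule gaussian_width_scaleR[symmetric])
  also have "\<dots> \<le> gaussian_width (\<psi> ` X)"
    using assms by (intro gaussian_width_image_mono) (auto simp: dist_norm scaleR_diff_right[symmetric])
  finally show ?thesis .
qed

lemma gaussian_width_singleton: "gaussian_width {x :: 'a::euclidean_space} = 0"
proof -
  have "gaussian_width ((\<lambda>_. x) ` {x}) = gaussian_width ((\<lambda>_. 0 :: 'a) ` {x})"
    by (intro antisym gaussian_width_image_mono) auto
  then show ?thesis
    by (simp add: gaussian_width_def)
qed

lemma eps_isometric_imp_nonneg:
  assumes "eps_isometric \<epsilon> \<psi> X" "x \<in> X" "y \<in> X" "x \<noteq> y"
  shows "0 \<le> \<epsilon>"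
proof -
  have "(1 - \<epsilon>) * dist x y \<le> (1 + \<epsilon>) * dist x y"
    using assms(1-3) unfolding eps_isometric_def by (meson order_trans)
  then show ?thesis
    using assms(4) by (simp add: mult_le_cancel_right)
qed

theorem lemma6:
  fixes X :: "'m::euclidean_space set" and S :: "'d::euclidean_space set"
    and \<psi> :: "'m \<Rightarrow> 'd" and \<epsilon> :: real
  assumes "finite X" and "X \<noteq> {}" and "X \<subseteq> sphere 0 1"
    and "eps_isometric \<epsilon> \<psi> X" and "S = \<psi> ` X"
  shows "(1 - \<epsilon>) * gaussian_width X \<le> gaussian_width S
       \<and> gaussian_width S \<le> (1 + \<epsilon>) * gaussian_width X"
proof -
  have lower: "(1 - \<epsilon>) * dist x y \<le> dist (\<psi> x) (\<psi> y)"
    and upper: "dist (\<psi> x) (\<psi> y) \<le> (1 + \<epsilon>) * dist x y" if "x \<in> X" "y \<in> X" for x y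
    using assms(4) that by (auto simp: eps_isometric_def)
  have width_X: "0 \<le> gaussian_width X" and width_S: "0 \<le> gaussian_width S"
    using assms(1,2,5) by (auto intro!: gaussian_width_nonneg)
  have "(1 - \<epsilon>) * gaussian_width X \<le> gaussian_width S"
  proof (cases "0 \<le> 1 - \<epsilon>")
    case True
    then show ?thesis
      unfolding assms(5) by (rule gaussian_width_expanding_image[OF assms(1,2) _ lower])
  qed (use mult_nonpos_nonneg[of "1 - \<epsilon>" "gaussian_width X"] width_X width_S in linarith)
  moreover have "gaussian_width S \<le> (1 + \<epsilon>) * gaussian_width X"
  proof (cases "0 \<le> 1 + \<epsilon>")
    case True
    then have "(1 + \<epsilon>)-lipschitz_on X \<psi>"
      using upper by (intro lipschitz_onI)
    then show ?thesis
      unfolding assms(5) by (rule gaussian_width_lipschitz_image[OF assms(1,2)])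
  next
    case False
    obtain x where x: "x \<in> X"
      using assms(2) by blast
    then have "X = {x}"
      using eps_isometric_imp_nonneg[OF assms(4) x] False by force
    then show ?thesis
      using assms(5) by (simp add: gaussian_width_singleton)
  qed
  ultimately show ?thesis ..
qed

end
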